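(* Consider the second-order Kuramoto model with bonding force $$\dot\theta_i=\omega_i,\qquad \dot\omega_i=\frac{1}{N}\sum_{j=1}^N\big[\kappa_0\cos(\theta_j-\theta_i)+\kappa_1\big](\omega_j-\omega_i)+\frac{\kappa_2}{N}\sum_{j=1}^N\big[|\theta_j-\theta_i|-\theta^\infty_{ij}\big]\operatorname{sgn}(\theta_j-\theta_i),\quad i\in[N].$$ Suppose $(\Theta^0,W^0)\in\mathcal{S}$, $\mathcal{E}(0)<\frac{\kappa_2(\min_{i\ne j}\theta^\infty_{ij})^2}{2N}$, $\kappa_0\cos\mathcal{U}+\kappa_1>0$, $\kappa_2>0$, and let $\{\theta_i\}$ be a global smooth solution. Then for $i\ne j$, $$\sup_{t\ge0}\Big|\frac{d}{dt}|\omega_j(t)-\omega_i(t)|^2\Big|<\infty,$$ and consequently the map $t\mapsto\sum_{i,j=1}^N|\omega_j(t)-\omega_i(t)|^2$ is uniformly continuous on $[0,\infty)$.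
   Context: $N\ge2$, $\kappa_0,\kappa_1\ge0$; $[\theta^\infty_{ij}]$ real symmetric with zero diagonal; $\operatorname{sgn}$ the sign function. $\mathcal{E}:=\frac12\sum_i|\omega_i|^2+\frac{\kappa_2}{4N}\sum_{i,j}(|\theta_j-\theta_i|-\theta^\infty_{ij})^2$; $\mathcal{U}:=\max_{i\ne j}\theta^\infty_{ij}+\sqrt{2N\mathcal{E}(0)/\kappa_2}$; $\mathcal{S}:=\{(\Theta,W)\in\mathbb{R}^{2N}:|\theta_i-\theta_j|<\mathcal{U}<\pi\ \forall i,j\}$. *)

theory Defs
  imports "HOL-Analysis.Analysis"
begin

text \<open>Oscillators are indexed by 0..N-1. A state is a pair of maps nat => real
 (phases Theta and frequencies W); only indices below N matter.\<close>

definition kur_energy ::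
  "nat \<Rightarrow> real \<Rightarrow> (nat \<Rightarrow> nat \<Rightarrow> real) \<Rightarrow> (nat \<Rightarrow> real) \<Rightarrow> (nat \<Rightarrow> real) \<Rightarrow> real" where
  "kur_energy N \<kappa>2 thinf \<Theta> W =
     (1/2) * (\<Sum>i<N. (W i)\<^sup>2)
     + \<kappa>2 / (4 * real N) * (\<Sum>i<N. \<Sum>j<N. (\<bar>\<Theta> j - \<Theta> i\<bar> - thinf i j)\<^sup>2)"

definition max_thinf :: "nat \<Rightarrow> (nat \<Rightarrow> nat \<Rightarrow> real) \<Rightarrow> real" where
  "max_thinf N thinf = Max {thinf i j | i j. i < N \<and> j < N \<and> i \<noteq> j}"

definition min_thinf :: "nat \<Rightarrow> (nat \<Rightarrow> nat \<Rightarrow> real) \<Rightarrow> real" where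
  "min_thinf N thinf = Min {thinf i j | i j. i < N \<and> j < N \<and> i \<noteq> j}"

definition kur_U :: "nat \<Rightarrow> real \<Rightarrow> (nat \<Rightarrow> nat \<Rightarrow> real) \<Rightarrow> real \<Rightarrow> real" where
  "kur_U N \<kappa>2 thinf E0 = max_thinf N thinf + sqrt (2 * real N * E0 / \<kappa>2)"

definition in_S :: "nat \<Rightarrow> real \<Rightarrow> (nat \<Rightarrow> real) \<Rightarrow> bool" where
  "in_S N U \<Theta> \<longleftrightarrow> (\<forall>i<N. \<forall>j<N. \<bar>\<Theta> i - \<Theta> j\<bar> < U) \<and> U < pi"

definition kur_rhs ::
  "nat \<Rightarrow> real \<Rightarrow> real \<Rightarrow> real \<Rightarrow> (nat \<Rightarrow> nat \<Rightarrow> real) \<Rightarrow> (nat \<Rightarrow> real) \<Rightarrow> (nat \<Rightarrow> real) \<Rightarrow> nat \<Rightarrow> real" where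
  "kur_rhs N \<kappa>0 \<kappa>1 \<kappa>2 thinf \<Theta> W i =
     (1 / real N) * (\<Sum>j<N. (\<kappa>0 * cos (\<Theta> j - \<Theta> i) + \<kappa>1) * (W j - W i))
     + (\<kappa>2 / real N) * (\<Sum>j<N. (\<bar>\<Theta> j - \<Theta> i\<bar> - thinf i j) * sgn (\<Theta> j - \<Theta> i))"

definition kur_solution ::
  "nat \<Rightarrow> real \<Rightarrow> real \<Rightarrow> real \<Rightarrow> (nat \<Rightarrow> nat \<Rightarrow> real) \<Rightarrow> (real \<Rightarrow> nat \<Rightarrow> real) \<Rightarrow> (real \<Rightarrow> nat \<Rightarrow> real) \<Rightarrow> bool" where
  "kur_solution N \<kappa>0 \<kappa>1 \<kappa>2 thinf \<theta> \<omega> \<longleftrightarrow>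
     (\<forall>t\<ge>0. \<forall>i<N.
        ((\<lambda>s. \<theta> s i) has_real_derivative \<omega> t i) (at t within {0..}) \<and>
        ((\<lambda>s. \<omega> s i) has_real_derivative kur_rhs N \<kappa>0 \<kappa>1 \<kappa>2 thinf (\<theta> t) (\<omega> t) i) (at t within {0..}))"

end

theory Submission
  imports Defs
begin

text \<open>
  Along a solution the energy satisfies
  \<open>E' = -(1/2N) \<Sum>\<^sub>i\<^sub>j (\<kappa>\<^sub>0 cos(\<theta>\<^sub>j - \<theta>\<^sub>i) + \<kappa>\<^sub>1) (\<omega>\<^sub>j - \<omega>\<^sub>i)\<^sup>2\<close>
  as long as no two phases coincide, so it does not increase while, in addition, all these couplings
  are positive. Conversely, \<open>E(t) \<le> E(0)\<close> forces every phase gap to lie within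
  \<open>s = sqrt (2 N E(0) / \<kappa>\<^sub>2)\<close> of its bond length \<open>\<theta>\<^sup>\<infinity>\<^sub>i\<^sub>j\<close>; since \<open>s < min \<theta>\<^sup>\<infinity>\<close>
  and \<open>max \<theta>\<^sup>\<infinity> + s = U < \<pi>\<close>, no gap vanishes and every coupling stays above
  \<open>\<kappa>\<^sub>0 cos U + \<kappa>\<^sub>1 > 0\<close>. A continuity argument (the set of bad times is closed, and the first
  bad time would satisfy the energy bound) gives \<open>E(t) \<le> E(0)\<close> for all \<open>t \<ge> 0\<close>. Hence the
  frequencies are bounded by \<open>sqrt (2 E(0))\<close>, so are the right-hand sides of the system, and
  therefore the derivatives of all \<open>(\<omega>\<^sub>j - \<omega>\<^sub>i)\<^sup>2\<close>; their sum is Lipschitz, hence uniformly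
  continuous.
\<close>

lemma has_real_derivative_abs:
  fixes g :: "real \<Rightarrow> real"
  assumes g': "(g has_real_derivative g') (at t within S)" and nz: "g t \<noteq> 0"
  shows "((\<lambda>s. \<bar>g s\<bar>) has_real_derivative sgn (g t) * g') (at t within S)"
proof -
  have "\<forall>\<^sub>F y in nhds (g t). \<bar>y\<bar> = sgn (g t) * y"
  proof (cases "g t > 0")
    case True
    then have "\<forall>\<^sub>F y in nhds (g t). y > 0"
      using order_tendstoD(1)[OF filterlim_ident True] by simp
    then show ?thesis by eventually_elim (use True in auto)
  next
    case False
    with nz have "g t < 0" by simp
    then have "\<forall>\<^sub>F y in nhds (g t). y < 0"
      using order_tendstoD(2)[OF filterlim_ident \<open>g t < 0\<close>] by simp
    then show ?thesis by eventually_elim (use \<open>g t < 0\<close> in auto)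
  qed
  moreover have "((\<lambda>y. sgn (g t) * y) has_real_derivative sgn (g t)) (at (g t))"
    using DERIV_cmult[OF DERIV_ident] by simp
  ultimately have "(abs has_real_derivative sgn (g t)) (at (g t))"
    using DERIV_cong_ev[OF refl _ refl] by blast
  then show ?thesis
    using DERIV_chain2[OF _ g'] by blast
qed

lemma at_within_atLeast_neq_bot:
  fixes a t :: real
  assumes "a \<le> t"
  shows "at t within {a..} \<noteq> bot"
proof -
  have "at_right t \<le> at t within {a..}"
    using assms by (intro at_le) auto
  then show ?thesis
    using trivial_limit_at_right_real by (metis bot.extremum_uniqueI)
qed

lemma sum_sum_antisym_mult:
  fixes h :: "'a \<Rightarrow> 'a \<Rightarrow> real"
  assumes antisym: "\<And>i j. i \<in> A \<Longrightarrow> j \<in> A \<Longrightarrow> h j i = - h i j"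
  shows "(\<Sum>i\<in>A. \<Sum>j\<in>A. h i j * w i) = - (1/2) * (\<Sum>i\<in>A. \<Sum>j\<in>A. h i j * (w j - w i))"
proof -
  have "(\<Sum>i\<in>A. \<Sum>j\<in>A. h i j * w i) = (\<Sum>j\<in>A. \<Sum>i\<in>A. h i j * w i)"
    by (rule sum.swap)
  also have "\<dots> = (\<Sum>j\<in>A. \<Sum>i\<in>A. - (h j i * w i))"
  proof (intro sum.cong refl)
    fix i j assume "i \<in> A" "j \<in> A"
    then show "h i j * w i = - (h j i * w i)"
      using antisym[of j i] by simp
  qed
  finally have "(\<Sum>i\<in>A. \<Sum>j\<in>A. h i j * w i) = - (\<Sum>i\<in>A. \<Sum>j\<in>A. h i j * w j)"
    by (simp add: sum_negf)
  then show ?thesis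
    by (simp add: right_diff_distrib sum_subtractf)
qed

lemma abs_sum_lessThan_le:
  fixes f :: "nat \<Rightarrow> real"
  assumes "\<And>j. j < N \<Longrightarrow> \<bar>f j\<bar> \<le> C"
  shows "\<bar>\<Sum>j<N. f j\<bar> \<le> real N * C"
  using order_trans[OF sum_abs sum_bounded_above[of "{..<N}" "\<lambda>j. \<bar>f j\<bar>" C]] assms by simp

lemma abs_mean_le:
  fixes f :: "nat \<Rightarrow> real"
  assumes "N > 0" and "\<And>j. j < N \<Longrightarrow> \<bar>f j\<bar> \<le> C"
  shows "\<bar>(\<Sum>j<N. f j) / real N\<bar> \<le> C"
  using abs_sum_lessThan_le[OF assms(2)] assms(1) by (simp add: field_simps)

lemma atLeast_induct_closed_exceptions:
  fixes P :: "real \<Rightarrow> bool"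
  assumes closed: "closed {t. a \<le> t \<and> \<not> P t}"
    and step: "\<And>t. a \<le> t \<Longrightarrow> (\<And>u. a \<le> u \<Longrightarrow> u < t \<Longrightarrow> P u) \<Longrightarrow> P t"
    and "a \<le> t"
  shows "P t"
proof (rule ccontr)
  define B where "B = {t. a \<le> t \<and> \<not> P t}"
  assume "\<not> P t"
  with \<open>a \<le> t\<close> have "B \<noteq> {}"
    unfolding B_def by auto
  moreover have below: "bdd_below B"
    unfolding B_def by (rule bdd_belowI[of _ a]) auto
  ultimately have first: "Inf B \<in> B"
    using closed by (intro closed_contains_Inf) (simp_all add: B_def)
  have "P (Inf B)"
  proof (rule step)
    show "a \<le> Inf B"
      using first unfolding B_def by simp
  next
    fix u assume "a \<le> u" "u < Inf B"
    then show "P u"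
      using cInf_lower[OF _ below, of u] unfolding B_def by force
  qed
  with first show False
    unfolding B_def by simp
qed

lemma uniformly_continuous_on_bounded_derivative:
  fixes f :: "real \<Rightarrow> real"
  assumes "convex S"
    and deriv: "\<And>t. t \<in> S \<Longrightarrow> (f has_real_derivative f' t) (at t within S)"
    and bound: "\<And>t. t \<in> S \<Longrightarrow> \<bar>f' t\<bar> \<le> B"
  shows "uniformly_continuous_on S f"
proof (rule lipschitz_on_uniformly_continuous)
  show "(max B 0)-lipschitz_on S f"
  proof (rule lipschitz_onI)
    fix x y assume "x \<in> S" "y \<in> S"
    have "norm (f x - f y) \<le> max B 0 * norm (x - y)"
      by (rule field_differentiable_bound[OF \<open>convex S\<close> deriv])
         (use bound \<open>x \<in> S\<close> \<open>y \<in> S\<close> in \<open>auto intro: le_max_iff_disj[THEN iffD2]\<close>)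
    then show "dist (f x) (f y) \<le> max B 0 * dist x y"
      by (simp add: dist_norm)
  qed simp
qed

lemma kur_energy_nonneg:
  assumes "\<kappa>2 \<ge> 0"
  shows "0 \<le> kur_energy N \<kappa>2 thinf \<Theta> W"
  unfolding kur_energy_def using assms by (intro add_nonneg_nonneg mult_nonneg_nonneg sum_nonneg) auto

lemma kur_energy_ge_kinetic:
  assumes "\<kappa>2 \<ge> 0" and "i < N"
  shows "(W i)\<^sup>2 / 2 \<le> kur_energy N \<kappa>2 thinf \<Theta> W"
proof -
  have "(W i)\<^sup>2 \<le> (\<Sum>k<N. (W k)\<^sup>2)"
    by (rule member_le_sum) (use assms(2) in auto)
  moreover have "0 \<le> \<kappa>2 / (4 * real N) * (\<Sum>i<N. \<Sum>j<N. (\<bar>\<Theta> j - \<Theta> i\<bar> - thinf i j)\<^sup>2)"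
    using assms(1) by (intro mult_nonneg_nonneg sum_nonneg) auto
  ultimately show ?thesis
    unfolding kur_energy_def by linarith
qed

lemma kur_energy_ge_bond:
  assumes "\<kappa>2 \<ge> 0" and ij: "i < N" "j < N" "i \<noteq> j" and sym: "thinf i j = thinf j i"
  shows "\<kappa>2 / (2 * real N) * (\<bar>\<Theta> j - \<Theta> i\<bar> - thinf i j)\<^sup>2 \<le> kur_energy N \<kappa>2 thinf \<Theta> W"
proof -
  define f where "f k l = (\<bar>\<Theta> l - \<Theta> k\<bar> - thinf k l)\<^sup>2" for k l
  have "f i j + f j i \<le> (\<Sum>l<N. f i l) + (\<Sum>l<N. f j l)"
    by (intro add_mono member_le_sum) (use ij in \<open>auto simp: f_def\<close>)
  also have "\<dots> = (\<Sum>k\<in>{i, j}. \<Sum>l<N. f k l)"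
    using ij by simp
  also have "\<dots> \<le> (\<Sum>k<N. \<Sum>l<N. f k l)"
    by (rule sum_mono2) (use ij in \<open>auto simp: f_def intro!: sum_nonneg\<close>)
  finally have "2 * f i j \<le> (\<Sum>k<N. \<Sum>l<N. f k l)"
    using sym by (simp add: f_def abs_minus_commute)
  then have "\<kappa>2 / (4 * real N) * (2 * f i j) \<le> \<kappa>2 / (4 * real N) * (\<Sum>k<N. \<Sum>l<N. f k l)"
    using assms(1) by (intro mult_left_mono) auto
  moreover have "0 \<le> (1/2) * (\<Sum>i<N. (W i)\<^sup>2)"
    by (auto intro!: sum_nonneg)
  ultimately show ?thesis
    unfolding kur_energy_def f_def by simp
qed

lemma kur_velocity_le_energy:
  assumes "\<kappa>2 \<ge> 0" and "kur_energy N \<kappa>2 thinf \<Theta> W \<le> E" and "i < N"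
  shows "\<bar>W i\<bar> \<le> sqrt (2 * E)"
proof -
  have "(W i)\<^sup>2 \<le> 2 * E"
    using kur_energy_ge_kinetic[OF assms(1,3), where \<Theta>=\<Theta> and thinf=thinf and W=W] assms(2) by simp
  then show ?thesis
    using real_sqrt_le_mono by fastforce
qed

lemma kur_bond_deviation_le_energy:
  assumes "\<kappa>2 > 0" and "kur_energy N \<kappa>2 thinf \<Theta> W \<le> E"
    and ij: "i < N" "j < N" "i \<noteq> j" and sym: "thinf i j = thinf j i"
  shows "\<bar>\<bar>\<Theta> j - \<Theta> i\<bar> - thinf i j\<bar> \<le> sqrt (2 * real N * E / \<kappa>2)"
proof -
  have "\<kappa>2 / (2 * real N) * (\<bar>\<Theta> j - \<Theta> i\<bar> - thinf i j)\<^sup>2 \<le> E"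
    using kur_energy_ge_bond[OF less_imp_le[OF assms(1)] ij sym, where \<Theta>=\<Theta> and W=W] assms(2) by simp
  then have "(\<bar>\<Theta> j - \<Theta> i\<bar> - thinf i j)\<^sup>2 \<le> 2 * real N * E / \<kappa>2"
    using assms(1) ij by (simp add: field_simps)
  then show ?thesis
    using real_sqrt_le_mono by fastforce
qed

lemma kur_rhs_power_balance:
  assumes sym: "\<And>i j. i < N \<Longrightarrow> j < N \<Longrightarrow> thinf i j = thinf j i"
  shows "(\<Sum>i<N. W i * kur_rhs N \<kappa>0 \<kappa>1 \<kappa>2 thinf \<Theta> W i)
    = - (\<Sum>i<N. \<Sum>j<N. (\<kappa>0 * cos (\<Theta> j - \<Theta> i) + \<kappa>1) * (W j - W i)\<^sup>2) / (2 * real N)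
      - \<kappa>2 / (2 * real N) * (\<Sum>i<N. \<Sum>j<N. (\<bar>\<Theta> j - \<Theta> i\<bar> - thinf i j) * sgn (\<Theta> j - \<Theta> i) * (W j - W i))"
proof -
  define a where "a i j = (\<kappa>0 * cos (\<Theta> j - \<Theta> i) + \<kappa>1) * (W j - W i)" for i j
  define g where "g i j = (\<bar>\<Theta> j - \<Theta> i\<bar> - thinf i j) * sgn (\<Theta> j - \<Theta> i)" for i j
  have a_antisym: "a j i = - a i j" for i j
    unfolding a_def by (simp add: cos_minus[of "\<Theta> i - \<Theta> j", symmetric] algebra_simps)
  have g_antisym: "g j i = - g i j" if "i < N" "j < N" for i j
    unfolding g_def using sym[OF that] sgn_minus[of "\<Theta> j - \<Theta> i"] by (simp add: abs_minus_commute)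
  have "W i * kur_rhs N \<kappa>0 \<kappa>1 \<kappa>2 thinf \<Theta> W i
      = (\<Sum>j<N. a i j * W i) / real N + \<kappa>2 / real N * (\<Sum>j<N. g i j * W i)" for i
    unfolding kur_rhs_def a_def g_def sum_distrib_right[symmetric] by (simp add: algebra_simps)
  then have "(\<Sum>i<N. W i * kur_rhs N \<kappa>0 \<kappa>1 \<kappa>2 thinf \<Theta> W i)
      = (\<Sum>i<N. \<Sum>j<N. a i j * W i) / real N + \<kappa>2 / real N * (\<Sum>i<N. \<Sum>j<N. g i j * W i)"
    by (simp add: sum.distrib sum_divide_distrib sum_distrib_left)
  also have "(\<Sum>i<N. \<Sum>j<N. a i j * W i) = - (1/2) * (\<Sum>i<N. \<Sum>j<N. a i j * (W j - W i))"
    by (rule sum_sum_antisym_mult) (rule a_antisym)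
  also have "(\<Sum>i<N. \<Sum>j<N. g i j * W i) = - (1/2) * (\<Sum>i<N. \<Sum>j<N. g i j * (W j - W i))"
    by (rule sum_sum_antisym_mult) (meson g_antisym lessThan_iff)
  finally show ?thesis
    unfolding a_def g_def by (simp add: power2_eq_square mult.assoc)
qed

lemma finite_thinf_values: "finite {thinf i j | i j. i < (N::nat) \<and> j < N \<and> i \<noteq> j}"
  using finite_image_set2[of "\<lambda>i. i < N" "\<lambda>j. j < N" thinf] by (rule rev_finite_subset) auto

lemma min_thinf_le: "i < N \<Longrightarrow> j < N \<Longrightarrow> i \<noteq> j \<Longrightarrow> min_thinf N thinf \<le> thinf i j"
  unfolding min_thinf_def by (rule Min_le[OF finite_thinf_values]) auto

lemma max_thinf_ge: "i < N \<Longrightarrow> j < N \<Longrightarrow> i \<noteq> j \<Longrightarrow> thinf i j \<le> max_thinf N thinf"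
  unfolding max_thinf_def by (rule Max_ge[OF finite_thinf_values]) auto

lemma min_thinf_attained:
  assumes "N \<ge> 2"
  shows "\<exists>i<N. \<exists>j<N. i \<noteq> j \<and> thinf i j = min_thinf N thinf"
proof -
  have "thinf 0 1 \<in> {thinf i j | i j. i < N \<and> j < N \<and> i \<noteq> j}"
    using assms by fastforce
  then have "min_thinf N thinf \<in> {thinf i j | i j. i < N \<and> j < N \<and> i \<noteq> j}"
    unfolding min_thinf_def by (intro Min_in finite_thinf_values) auto
  then show ?thesis
    by fastforce
qed

lemma kur_bond_force_le_energy:
  assumes "\<kappa>2 > 0" and sym: "\<forall>i<N. \<forall>j<N. thinf i j = thinf j i"
    and energy: "kur_energy N \<kappa>2 thinf \<Theta> W \<le> E" and "i < N" "j < N"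
  shows "\<bar>(\<bar>\<Theta> j - \<Theta> i\<bar> - thinf i j) * sgn (\<Theta> j - \<Theta> i)\<bar> \<le> sqrt (2 * real N * E / \<kappa>2)"
proof (cases "i = j")
  case True
  have "0 \<le> E"
    using order_trans[OF kur_energy_nonneg energy] assms(1) by simp
  with True show ?thesis
    using assms(1) by simp
next
  case False
  have "\<bar>(\<bar>\<Theta> j - \<Theta> i\<bar> - thinf i j) * sgn (\<Theta> j - \<Theta> i)\<bar> \<le> \<bar>\<bar>\<Theta> j - \<Theta> i\<bar> - thinf i j\<bar>"
    by (simp add: abs_mult abs_sgn_eq)
  also have "\<dots> \<le> sqrt (2 * real N * E / \<kappa>2)"
    using kur_bond_deviation_le_energy[OF assms(1) energy \<open>i < N\<close> \<open>j < N\<close> False] sym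
      \<open>i < N\<close> \<open>j < N\<close> by simp
  finally show ?thesis .
qed

lemma kur_rhs_bounded_by_energy:
  assumes "\<kappa>0 \<ge> 0" "\<kappa>1 \<ge> 0" "\<kappa>2 > 0" and sym: "\<forall>i<N. \<forall>j<N. thinf i j = thinf j i"
    and energy: "kur_energy N \<kappa>2 thinf \<Theta> W \<le> E" and "i < N"
  shows "\<bar>kur_rhs N \<kappa>0 \<kappa>1 \<kappa>2 thinf \<Theta> W i\<bar>
    \<le> 2 * (\<kappa>0 + \<kappa>1) * sqrt (2 * E) + \<kappa>2 * sqrt (2 * real N * E / \<kappa>2)"
proof -
  define w where "w = sqrt (2 * E)"
  define A where "A = (\<Sum>j<N. (\<kappa>0 * cos (\<Theta> j - \<Theta> i) + \<kappa>1) * (W j - W i)) / real N"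
  define B where "B = (\<Sum>j<N. (\<bar>\<Theta> j - \<Theta> i\<bar> - thinf i j) * sgn (\<Theta> j - \<Theta> i)) / real N"
  have W: "\<bar>W j\<bar> \<le> w" if "j < N" for j
    unfolding w_def using kur_velocity_le_energy[OF _ energy that] assms(3) by simp
  have coupling: "\<bar>A\<bar> \<le> 2 * (\<kappa>0 + \<kappa>1) * w"
    unfolding A_def
  proof (rule abs_mean_le)
    fix j assume "j < N"
    have "\<bar>\<kappa>0 * cos (\<Theta> j - \<Theta> i)\<bar> \<le> \<kappa>0"
      using assms(1) by (simp add: abs_mult mult_left_le)
    then have "\<bar>\<kappa>0 * cos (\<Theta> j - \<Theta> i) + \<kappa>1\<bar> \<le> \<kappa>0 + \<kappa>1"
      using assms(2) by linarith
    moreover have "\<bar>W j - W i\<bar> \<le> 2 * w"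
      using W[OF \<open>j < N\<close>] W[OF \<open>i < N\<close>] by linarith
    ultimately have "\<bar>\<kappa>0 * cos (\<Theta> j - \<Theta> i) + \<kappa>1\<bar> * \<bar>W j - W i\<bar> \<le> (\<kappa>0 + \<kappa>1) * (2 * w)"
      by (intro mult_mono) auto
    then show "\<bar>(\<kappa>0 * cos (\<Theta> j - \<Theta> i) + \<kappa>1) * (W j - W i)\<bar> \<le> 2 * (\<kappa>0 + \<kappa>1) * w"
      by (simp add: abs_mult mult_ac)
  qed (use \<open>i < N\<close> in simp)
  have bonding: "\<bar>B\<bar> \<le> sqrt (2 * real N * E / \<kappa>2)"
    unfolding B_def using kur_bond_force_le_energy[OF assms(3) sym energy \<open>i < N\<close>] \<open>i < N\<close>
    by (intro abs_mean_le) auto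
  have "kur_rhs N \<kappa>0 \<kappa>1 \<kappa>2 thinf \<Theta> W i = A + \<kappa>2 * B"
    unfolding kur_rhs_def A_def B_def by simp
  then have "\<bar>kur_rhs N \<kappa>0 \<kappa>1 \<kappa>2 thinf \<Theta> W i\<bar> \<le> \<bar>A\<bar> + \<kappa>2 * \<bar>B\<bar>"
    using abs_triangle_ineq[of A "\<kappa>2 * B"] assms(3) by (simp add: abs_mult)
  also have "\<dots> \<le> 2 * (\<kappa>0 + \<kappa>1) * w + \<kappa>2 * sqrt (2 * real N * E / \<kappa>2)"
    using coupling bonding assms(3) by (intro add_mono mult_left_mono) auto
  finally show ?thesis
    unfolding w_def .
qed

text \<open>Positivity of \<open>min \<theta>\<^sup>\<infinity>\<close> is not assumed: a pair attaining a nonpositive minimum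
  would violate the deviation bound.\<close>

lemma kur_bond_tolerance_lt_min_thinf:
  assumes "N \<ge> 2" and "\<kappa>2 > 0" and sym: "\<forall>i<N. \<forall>j<N. thinf i j = thinf j i"
    and small: "kur_energy N \<kappa>2 thinf \<Theta> W < \<kappa>2 * (min_thinf N thinf)\<^sup>2 / (2 * real N)"
  shows "sqrt (2 * real N * kur_energy N \<kappa>2 thinf \<Theta> W / \<kappa>2) < min_thinf N thinf"
proof -
  define s where "s = sqrt (2 * real N * kur_energy N \<kappa>2 thinf \<Theta> W / \<kappa>2)"
  define m where "m = min_thinf N thinf"
  have "2 * real N * kur_energy N \<kappa>2 thinf \<Theta> W / \<kappa>2 < m\<^sup>2"
    using small assms(1,2) unfolding m_def by (simp add: field_simps)
  then have s_less: "s < \<bar>m\<bar>"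
    unfolding s_def using real_sqrt_less_mono by fastforce
  obtain i j where ij: "i < N" "j < N" "i \<noteq> j" and "thinf i j = m"
    using min_thinf_attained[OF assms(1)] unfolding m_def by blast
  moreover have "thinf i j = thinf j i"
    using sym ij by simp
  ultimately have "\<bar>\<bar>\<Theta> j - \<Theta> i\<bar> - m\<bar> \<le> s"
    unfolding s_def
    using kur_bond_deviation_le_energy[OF assms(2) order_refl ij, where \<Theta> = \<Theta> and W = W and thinf = thinf]
    by simp
  with s_less have "m > 0"
    by (cases "m > 0") (auto simp: abs_if split: if_splits)
  with s_less show ?thesis
    unfolding s_def m_def by simp
qed

locale kuramoto_solution =
  fixes N :: nat and \<kappa>0 \<kappa>1 \<kappa>2 :: real and thinf :: "nat \<Rightarrow> nat \<Rightarrow> real"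
    and \<theta> \<omega> :: "real \<Rightarrow> nat \<Rightarrow> real"
  assumes thinf_sym: "\<forall>i<N. \<forall>j<N. thinf i j = thinf j i"
    and solution: "kur_solution N \<kappa>0 \<kappa>1 \<kappa>2 thinf \<theta> \<omega>"
begin

abbreviation energy :: "real \<Rightarrow> real" where
  "energy t \<equiv> kur_energy N \<kappa>2 thinf (\<theta> t) (\<omega> t)"

abbreviation acceleration :: "real \<Rightarrow> nat \<Rightarrow> real" where
  "acceleration t i \<equiv> kur_rhs N \<kappa>0 \<kappa>1 \<kappa>2 thinf (\<theta> t) (\<omega> t) i"

text \<open>Both conditions are open, and together they make the energy nonincreasing: the first makes
  every \<open>|\<theta>\<^sub>j - \<theta>\<^sub>i|\<close> differentiable, the second makes every dissipation weight positive.\<close>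

definition admissible :: "real \<Rightarrow> bool" where
  "admissible t \<longleftrightarrow>
     (\<forall>i<N. \<forall>j<N. i \<noteq> j \<longrightarrow> \<theta> t j \<noteq> \<theta> t i \<and> 0 < \<kappa>0 * cos (\<theta> t j - \<theta> t i) + \<kappa>1)"

lemma phase_derivative:
  "t \<ge> 0 \<Longrightarrow> i < N \<Longrightarrow> ((\<lambda>s. \<theta> s i) has_real_derivative \<omega> t i) (at t within {0..})"
  using solution unfolding kur_solution_def by blast

lemma frequency_derivative:
  "t \<ge> 0 \<Longrightarrow> i < N \<Longrightarrow> ((\<lambda>s. \<omega> s i) has_real_derivative acceleration t i) (at t within {0..})"
  using solution unfolding kur_solution_def by blast

lemma continuous_on_phase: "i < N \<Longrightarrow> continuous_on {0..} (\<lambda>s. \<theta> s i)"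
  by (rule DERIV_continuous_on[OF phase_derivative]) auto

lemma continuous_on_frequency: "i < N \<Longrightarrow> continuous_on {0..} (\<lambda>s. \<omega> s i)"
  by (rule DERIV_continuous_on[OF frequency_derivative]) auto

lemma continuous_on_energy: "continuous_on {0..} energy"
  unfolding kur_energy_def
  by (intro continuous_intros continuous_on_phase continuous_on_frequency) auto

lemma kinetic_energy_derivative:
  assumes "t \<ge> 0"
  shows "((\<lambda>s. \<Sum>i<N. (\<omega> s i)\<^sup>2) has_real_derivative
    2 * (\<Sum>i<N. \<omega> t i * acceleration t i)) (at t within {0..})"
proof -
  have "((\<lambda>s. \<Sum>i<N. (\<omega> s i)\<^sup>2) has_real_derivative
      (\<Sum>i<N. 2 * (\<omega> t i * acceleration t i))) (at t within {0..})"
  proof (rule DERIV_sum)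
    fix i assume "i \<in> {..<N}"
    then show "((\<lambda>s. (\<omega> s i)\<^sup>2) has_real_derivative 2 * (\<omega> t i * acceleration t i)) (at t within {0..})"
      using DERIV_power[OF frequency_derivative[OF assms], of i 2] by (simp add: mult_ac)
  qed
  then show ?thesis
    by (simp add: sum_distrib_left)
qed

lemma bond_energy_derivative:
  assumes "t \<ge> 0" and distinct: "\<And>i j. i < N \<Longrightarrow> j < N \<Longrightarrow> i \<noteq> j \<Longrightarrow> \<theta> t j \<noteq> \<theta> t i"
  shows "((\<lambda>s. \<Sum>i<N. \<Sum>j<N. (\<bar>\<theta> s j - \<theta> s i\<bar> - thinf i j)\<^sup>2) has_real_derivative
    2 * (\<Sum>i<N. \<Sum>j<N. (\<bar>\<theta> t j - \<theta> t i\<bar> - thinf i j) * sgn (\<theta> t j - \<theta> t i) * (\<omega> t j - \<omega> t i)))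
    (at t within {0..})"
proof -
  have "((\<lambda>s. \<Sum>i<N. \<Sum>j<N. (\<bar>\<theta> s j - \<theta> s i\<bar> - thinf i j)\<^sup>2) has_real_derivative
      (\<Sum>i<N. \<Sum>j<N. 2 * ((\<bar>\<theta> t j - \<theta> t i\<bar> - thinf i j) * sgn (\<theta> t j - \<theta> t i) * (\<omega> t j - \<omega> t i))))
      (at t within {0..})"
  proof (intro DERIV_sum)
    fix i j assume ij: "i \<in> {..<N}" "j \<in> {..<N}"
    show "((\<lambda>s. (\<bar>\<theta> s j - \<theta> s i\<bar> - thinf i j)\<^sup>2) has_real_derivative
        2 * ((\<bar>\<theta> t j - \<theta> t i\<bar> - thinf i j) * sgn (\<theta> t j - \<theta> t i) * (\<omega> t j - \<omega> t i)))
        (at t within {0..})"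
    proof (cases "i = j")
      case False
      have "((\<lambda>s. \<theta> s j - \<theta> s i) has_real_derivative \<omega> t j - \<omega> t i) (at t within {0..})"
        using ij by (intro DERIV_diff phase_derivative assms(1)) auto
      from DERIV_diff[OF has_real_derivative_abs[OF this] DERIV_const, of "thinf i j"]
      have "((\<lambda>s. \<bar>\<theta> s j - \<theta> s i\<bar> - thinf i j) has_real_derivative
          sgn (\<theta> t j - \<theta> t i) * (\<omega> t j - \<omega> t i)) (at t within {0..})"
        using distinct ij False by simp
      from DERIV_power[OF this, of 2] show ?thesis
        by (simp add: mult_ac)
    qed simp
  qed
  then show ?thesis
    by (simp add: sum_distrib_left)
qed

lemma energy_derivative:
  assumes "t \<ge> 0" and distinct: "\<And>i j. i < N \<Longrightarrow> j < N \<Longrightarrow> i \<noteq> j \<Longrightarrow> \<theta> t j \<noteq> \<theta> t i"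
  shows "(energy has_real_derivative
      - (\<Sum>i<N. \<Sum>j<N. (\<kappa>0 * cos (\<theta> t j - \<theta> t i) + \<kappa>1) * (\<omega> t j - \<omega> t i)\<^sup>2) / (2 * real N))
    (at t within {0..})"
proof -
  define Q where "Q = (\<Sum>i<N. \<Sum>j<N. (\<kappa>0 * cos (\<theta> t j - \<theta> t i) + \<kappa>1) * (\<omega> t j - \<omega> t i)\<^sup>2)"
  define G where "G = (\<Sum>i<N. \<Sum>j<N.
    (\<bar>\<theta> t j - \<theta> t i\<bar> - thinf i j) * sgn (\<theta> t j - \<theta> t i) * (\<omega> t j - \<omega> t i))"
  have balance: "(\<Sum>i<N. \<omega> t i * acceleration t i) = - Q / (2 * real N) - \<kappa>2 / (2 * real N) * G"
    unfolding Q_def G_def using kur_rhs_power_balance[of N thinf "\<omega> t" \<kappa>0 \<kappa>1 \<kappa>2 "\<theta> t"] thinf_sym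
    by simp
  have "(energy has_real_derivative
      (1/2) * (2 * (\<Sum>i<N. \<omega> t i * acceleration t i)) + \<kappa>2 / (4 * real N) * (2 * G)) (at t within {0..})"
    unfolding kur_energy_def G_def
    by (intro DERIV_add DERIV_cmult kinetic_energy_derivative bond_energy_derivative assms) auto
  moreover have "(1/2) * (2 * (\<Sum>i<N. \<omega> t i * acceleration t i)) + \<kappa>2 / (4 * real N) * (2 * G)
      = - Q / (2 * real N)"
    unfolding balance by (cases "N = 0") (simp_all add: field_simps)
  ultimately show ?thesis
    unfolding Q_def by simp
qed

lemma energy_has_nonpos_derivative:
  assumes "t \<ge> 0" and "admissible t"
  shows "\<exists>D \<le> 0. (energy has_real_derivative D) (at t within {0..})"
proof -
  have "0 \<le> (\<Sum>i<N. \<Sum>j<N. (\<kappa>0 * cos (\<theta> t j - \<theta> t i) + \<kappa>1) * (\<omega> t j - \<omega> t i)\<^sup>2)"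
  proof (intro sum_nonneg)
    fix i j assume "i \<in> {..<N}" "j \<in> {..<N}"
    show "0 \<le> (\<kappa>0 * cos (\<theta> t j - \<theta> t i) + \<kappa>1) * (\<omega> t j - \<omega> t i)\<^sup>2"
    proof (cases "i = j")
      case False
      with \<open>admissible t\<close> \<open>i \<in> {..<N}\<close> \<open>j \<in> {..<N}\<close> have "0 < \<kappa>0 * cos (\<theta> t j - \<theta> t i) + \<kappa>1"
        unfolding admissible_def by blast
      then show ?thesis
        by simp
    qed simp
  qed
  moreover have "(energy has_real_derivative
      - (\<Sum>i<N. \<Sum>j<N. (\<kappa>0 * cos (\<theta> t j - \<theta> t i) + \<kappa>1) * (\<omega> t j - \<omega> t i)\<^sup>2) / (2 * real N))
    (at t within {0..})"
    using \<open>admissible t\<close> unfolding admissible_def by (intro energy_derivative \<open>t \<ge> 0\<close>) blast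
  ultimately show ?thesis
    by (intro exI[of _ "- _ / (2 * real N)"] conjI) auto
qed

lemma energy_le_initial_if_admissible_before:
  assumes "t \<ge> 0" and admissible: "\<And>u. 0 \<le> u \<Longrightarrow> u < t \<Longrightarrow> admissible u"
  shows "energy t \<le> energy 0"
proof (rule DERIV_nonpos_imp_decreasing_open[OF \<open>t \<ge> 0\<close>])
  fix u assume "0 < u" "u < t"
  then have "admissible u"
    by (intro admissible) auto
  then obtain D where "D \<le> 0" "(energy has_real_derivative D) (at u within {0..})"
    using energy_has_nonpos_derivative[OF less_imp_le[OF \<open>0 < u\<close>]] by blast
  moreover have "at u within {0..} = at u"
    using \<open>0 < u\<close> by (intro at_within_interior) auto
  ultimately show "\<exists>D. (energy has_real_derivative D) (at u) \<and> D \<le> 0"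
    by auto
next
  show "continuous_on {0..t} energy"
    using continuous_on_energy by (rule continuous_on_subset) auto
qed

lemma closed_not_admissible: "closed {t. 0 \<le> t \<and> \<not> admissible t}"
proof -
  have "{t. 0 \<le> t \<and> \<not> admissible t} = (\<Union>i<N. \<Union>j\<in>{..<N} - {i}.
      {0..} \<inter> (\<lambda>t. \<theta> t j - \<theta> t i) -` ({0} \<union> {x. \<kappa>0 * cos x + \<kappa>1 \<le> 0}))"
    unfolding admissible_def by (auto simp: not_less; blast)
  moreover have "closed ({0..} \<inter> (\<lambda>t. \<theta> t j - \<theta> t i) -` ({0} \<union> {x. \<kappa>0 * cos x + \<kappa>1 \<le> 0}))"
    if "i < N" "j < N" for i j
    by (intro continuous_closed_preimage continuous_on_diff continuous_on_phase that closed_Un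
        closed_Collect_le continuous_intros)
  ultimately show ?thesis
    by (metis (no_types, lifting) closed_UN finite_Diff finite_lessThan lessThan_iff DiffD1)
qed

lemma energy_le_initial:
  assumes admissible_if_le: "\<And>t. t \<ge> 0 \<Longrightarrow> energy t \<le> energy 0 \<Longrightarrow> admissible t"
    and "t \<ge> 0"
  shows "energy t \<le> energy 0"
proof -
  have "admissible u" if "0 \<le> u" for u
    by (rule atLeast_induct_closed_exceptions[OF closed_not_admissible _ that])
      (use admissible_if_le energy_le_initial_if_admissible_before in blast)
  with \<open>t \<ge> 0\<close> show ?thesis
    by (intro energy_le_initial_if_admissible_before) auto
qed

lemma admissible_if_energy_le_initial:
  assumes "N \<ge> 2" and "\<kappa>0 \<ge> 0" and "\<kappa>2 > 0"
    and small: "energy 0 < \<kappa>2 * (min_thinf N thinf)\<^sup>2 / (2 * real N)"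
    and U_lt_pi: "kur_U N \<kappa>2 thinf (energy 0) < pi"
    and coupling_pos: "0 < \<kappa>0 * cos (kur_U N \<kappa>2 thinf (energy 0)) + \<kappa>1"
    and "energy t \<le> energy 0"
  shows "admissible t"
  unfolding admissible_def
proof (intro allI impI conjI)
  fix i j assume ij: "i < N" "j < N" "i \<noteq> j"
  define s where "s = sqrt (2 * real N * energy 0 / \<kappa>2)"
  have deviation: "\<bar>\<bar>\<theta> t j - \<theta> t i\<bar> - thinf i j\<bar> \<le> s"
    unfolding s_def using kur_bond_deviation_le_energy[OF \<open>\<kappa>2 > 0\<close> \<open>energy t \<le> energy 0\<close> ij] thinf_sym ij
    by simp
  have "s < min_thinf N thinf"
    unfolding s_def by (rule kur_bond_tolerance_lt_min_thinf[OF \<open>N \<ge> 2\<close> \<open>\<kappa>2 > 0\<close> thinf_sym small])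
  with deviation min_thinf_le[OF ij, where thinf = thinf] have "0 < \<bar>\<theta> t j - \<theta> t i\<bar>"
    unfolding abs_le_iff by linarith
  then show "\<theta> t j \<noteq> \<theta> t i"
    by simp
  have "\<bar>\<theta> t j - \<theta> t i\<bar> \<le> kur_U N \<kappa>2 thinf (energy 0)"
    unfolding kur_U_def s_def[symmetric] using deviation max_thinf_ge[OF ij, where thinf = thinf]
    unfolding abs_le_iff by linarith
  then have "cos (kur_U N \<kappa>2 thinf (energy 0)) \<le> cos (\<theta> t j - \<theta> t i)"
    using cos_monotone_0_pi_le[of "\<bar>\<theta> t j - \<theta> t i\<bar>"] U_lt_pi by simp
  then have "\<kappa>0 * cos (kur_U N \<kappa>2 thinf (energy 0)) \<le> \<kappa>0 * cos (\<theta> t j - \<theta> t i)"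
    using \<open>\<kappa>0 \<ge> 0\<close> by (rule mult_left_mono)
  with coupling_pos show "0 < \<kappa>0 * cos (\<theta> t j - \<theta> t i) + \<kappa>1"
    by linarith
qed

lemma frequency_gap_square_derivative:
  assumes "t \<ge> 0" "i < N" "j < N"
  shows "((\<lambda>s. (\<omega> s j - \<omega> s i)\<^sup>2) has_real_derivative
    2 * (acceleration t j - acceleration t i) * (\<omega> t j - \<omega> t i)) (at t within {0..})"
  using DERIV_power[OF DERIV_diff[OF frequency_derivative[OF assms(1,3)] frequency_derivative[OF assms(1,2)]],
      of 2]
  by (simp add: algebra_simps)

lemma frequency_gap_square_derivative_bounded:
  assumes "\<kappa>0 \<ge> 0" "\<kappa>1 \<ge> 0" "\<kappa>2 > 0" and energy_bounded: "\<And>t. t \<ge> 0 \<Longrightarrow> energy t \<le> E"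
  obtains M where "\<And>t i j. t \<ge> 0 \<Longrightarrow> i < N \<Longrightarrow> j < N \<Longrightarrow>
    \<bar>2 * (acceleration t j - acceleration t i) * (\<omega> t j - \<omega> t i)\<bar> \<le> M"
proof -
  define R where "R = 2 * (\<kappa>0 + \<kappa>1) * sqrt (2 * E) + \<kappa>2 * sqrt (2 * real N * E / \<kappa>2)"
  define w where "w = sqrt (2 * E)"
  have acceleration_bound: "\<bar>acceleration t i\<bar> \<le> R" if "t \<ge> 0" "i < N" for t i
    unfolding R_def
    by (rule kur_rhs_bounded_by_energy[OF assms(1-3) thinf_sym energy_bounded[OF that(1)] that(2)])
  have frequency_bound: "\<bar>\<omega> t i\<bar> \<le> w" if "t \<ge> 0" "i < N" for t i
    unfolding w_def using kur_velocity_le_energy[OF _ energy_bounded[OF that(1)] that(2)] assms(3) by simp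
  show ?thesis
  proof (rule that[of "2 * (2 * R) * (2 * w)"])
    fix t :: real and i j :: nat assume "t \<ge> 0" "i < N" "j < N"
    have "\<bar>acceleration t j - acceleration t i\<bar> \<le> 2 * R"
      using acceleration_bound[OF \<open>t \<ge> 0\<close> \<open>i < N\<close>] acceleration_bound[OF \<open>t \<ge> 0\<close> \<open>j < N\<close>] by linarith
    moreover have "\<bar>\<omega> t j - \<omega> t i\<bar> \<le> 2 * w"
      using frequency_bound[OF \<open>t \<ge> 0\<close> \<open>i < N\<close>] frequency_bound[OF \<open>t \<ge> 0\<close> \<open>j < N\<close>] by linarith
    ultimately have "\<bar>acceleration t j - acceleration t i\<bar> * \<bar>\<omega> t j - \<omega> t i\<bar> \<le> 2 * R * (2 * w)"
      by (intro mult_mono) (auto intro: order_trans[OF abs_ge_zero])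
    then show "\<bar>2 * (acceleration t j - acceleration t i) * (\<omega> t j - \<omega> t i)\<bar> \<le> 2 * (2 * R) * (2 * w)"
      unfolding abs_mult by (simp add: mult.commute)
  qed
qed

lemma uniformly_continuous_on_frequency_spread:
  assumes bound: "\<And>t i j. t \<ge> 0 \<Longrightarrow> i < N \<Longrightarrow> j < N \<Longrightarrow>
    \<bar>2 * (acceleration t j - acceleration t i) * (\<omega> t j - \<omega> t i)\<bar> \<le> M"
  shows "uniformly_continuous_on {0..} (\<lambda>t. \<Sum>i<N. \<Sum>j<N. (\<omega> t j - \<omega> t i)\<^sup>2)"
proof (rule uniformly_continuous_on_bounded_derivative)
  fix t :: real assume "t \<in> {0..}"
  then show "((\<lambda>t. \<Sum>i<N. \<Sum>j<N. (\<omega> t j - \<omega> t i)\<^sup>2) has_real_derivative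
      (\<Sum>i<N. \<Sum>j<N. 2 * (acceleration t j - acceleration t i) * (\<omega> t j - \<omega> t i))) (at t within {0..})"
    by (intro DERIV_sum frequency_gap_square_derivative) auto
next
  fix t :: real assume "t \<in> {0..}"
  then show "\<bar>\<Sum>i<N. \<Sum>j<N. 2 * (acceleration t j - acceleration t i) * (\<omega> t j - \<omega> t i)\<bar>
      \<le> real N * (real N * M)"
    by (intro abs_sum_lessThan_le bound) auto
qed simp

end

theorem lemma3p3:
  fixes N :: nat and \<kappa>0 \<kappa>1 \<kappa>2 :: real
    and thinf :: "nat \<Rightarrow> nat \<Rightarrow> real"
    and \<theta> \<omega> :: "real \<Rightarrow> nat \<Rightarrow> real"
  assumes N2: "N \<ge> 2"
    and k0: "\<kappa>0 \<ge> 0" and k1: "\<kappa>1 \<ge> 0" and k2: "\<kappa>2 > 0"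
    and sym: "\<forall>i<N. \<forall>j<N. thinf i j = thinf j i"
    and diag: "\<forall>i<N. thinf i i = 0"
    and sol: "kur_solution N \<kappa>0 \<kappa>1 \<kappa>2 thinf \<theta> \<omega>"
    and S0: "in_S N (kur_U N \<kappa>2 thinf (kur_energy N \<kappa>2 thinf (\<theta> 0) (\<omega> 0))) (\<theta> 0)"
    and E0: "kur_energy N \<kappa>2 thinf (\<theta> 0) (\<omega> 0) < \<kappa>2 * (min_thinf N thinf)\<^sup>2 / (2 * real N)"
    and pos: "\<kappa>0 * cos (kur_U N \<kappa>2 thinf (kur_energy N \<kappa>2 thinf (\<theta> 0) (\<omega> 0))) + \<kappa>1 > 0"
  shows "(\<forall>i<N. \<forall>j<N. i \<noteq> j \<longrightarrow>
            (\<exists>M. \<forall>t\<ge>0. \<forall>D.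
               ((\<lambda>s. (\<omega> s j - \<omega> s i)\<^sup>2) has_real_derivative D) (at t within {0..}) \<longrightarrow> \<bar>D\<bar> \<le> M))
         \<and> uniformly_continuous_on {0..} (\<lambda>t. \<Sum>i<N. \<Sum>j<N. (\<omega> t j - \<omega> t i)\<^sup>2)"
proof -
  interpret kuramoto_solution N \<kappa>0 \<kappa>1 \<kappa>2 thinf \<theta> \<omega>
    using sym sol by unfold_locales
  have U_lt_pi: "kur_U N \<kappa>2 thinf (energy 0) < pi"
    using S0 unfolding in_S_def by blast
  have energy_bound: "energy t \<le> energy 0" if "t \<ge> 0" for t
    using admissible_if_energy_le_initial[OF N2 k0 k2 E0 U_lt_pi pos] energy_le_initial that by blast
  obtain M where M: "\<And>t i j. t \<ge> 0 \<Longrightarrow> i < N \<Longrightarrow> j < N \<Longrightarrow>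
      \<bar>2 * (acceleration t j - acceleration t i) * (\<omega> t j - \<omega> t i)\<bar> \<le> M"
    using frequency_gap_square_derivative_bounded[OF k0 k1 k2 energy_bound] by blast
  have "\<bar>D\<bar> \<le> M"
    if "i < N" "j < N" "t \<ge> 0"
      and D: "((\<lambda>s. (\<omega> s j - \<omega> s i)\<^sup>2) has_real_derivative D) (at t within {0..})" for i j t D
  proof -
    have "D = 2 * (acceleration t j - acceleration t i) * (\<omega> t j - \<omega> t i)"
      using has_field_derivative_unique[OF D frequency_gap_square_derivative at_within_atLeast_neq_bot] that
      by blast
    with M that show ?thesis
      by blast
  qed
  then show ?thesis
    using uniformly_continuous_on_frequency_spread[OF M] by blast
qed

end
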